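(* Let $p\in(0,1]$ and let $(\mathcal M,d,0)$ be a pointed $p$-metric space with $\mathcal M=\{0,x,y\}$ (three distinct points). Put $d_x=d(x,0)$, $d_y=d(y,0)$, $d_{xy}=d(x,y)$. Then for all $a,b\in\mathbb R$, \[\|a\delta(x)+b\delta(y)\|_{\mathcal F_p(\mathcal M)}^p=\min\{|ad_x|^p+|bd_y|^p,\ |(a+b)d_x|^p+|bd_{xy}|^p,\ |(a+b)d_y|^p+|ad_{xy}|^p\}.\]
   Context: A $p$-metric space is a set with $d$ such that $d^p$ is a metric; pointed means a distinguished point $0$. A $p$-Banach space is a complete vector space with a $p$-norm. $\delta(x)$ is evaluation at $x$ on real functions on $\mathcal M$ vanishing at $0$, and $\mathcal F_p(\mathcal M)$ is the completion of $\mathrm{span}\{\delta(x)\}$ under $\|\sum a_i\delta(x_i)\|=\sup\|\sum a_if(x_i)\|_Y$ over $p$-Banach $Y$ and $1$-Lipschitz $f:\mathcal M\to Y$ with $f(0)=0$. *)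

theory Defs
  imports "HOL-Analysis.Analysis"
begin

definition p_metric :: "real \<Rightarrow> 'a set \<Rightarrow> ('a \<Rightarrow> 'a \<Rightarrow> real) \<Rightarrow> bool" where
  "p_metric p M d \<longleftrightarrow>
     (\<forall>u\<in>M. \<forall>v\<in>M. d u v \<ge> 0 \<and> (d u v = 0 \<longleftrightarrow> u = v) \<and> d u v = d v u) \<and>
     (\<forall>u\<in>M. \<forall>v\<in>M. \<forall>w\<in>M. d u w powr p \<le> d u v powr p + d v w powr p)"

definition p_norm :: "real \<Rightarrow> ('v::real_vector \<Rightarrow> real) \<Rightarrow> bool" where
  "p_norm p N \<longleftrightarrow>
     (\<forall>v. N v \<ge> 0) \<and> (\<forall>v. N v = 0 \<longleftrightarrow> v = 0) \<and>
     (\<forall>t v. N (t *\<^sub>R v) = \<bar>t\<bar> * N v) \<and>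
     (\<forall>v w. N (v + w) powr p \<le> N v powr p + N w powr p)"

definition p_banach :: "real \<Rightarrow> ('v::real_vector \<Rightarrow> real) \<Rightarrow> bool" where
  "p_banach p N \<longleftrightarrow> p_norm p N \<and>
     (\<forall>X :: nat \<Rightarrow> 'v. (\<forall>e>0. \<exists>K. \<forall>m\<ge>K. \<forall>n\<ge>K. N (X m - X n) < e)
        \<longrightarrow> (\<exists>L. (\<lambda>n. N (X n - L)) \<longlonglongrightarrow> 0))"

definition lip1_pointed :: "'a set \<Rightarrow> ('a \<Rightarrow> 'a \<Rightarrow> real) \<Rightarrow> 'a \<Rightarrow> ('v::real_vector \<Rightarrow> real) \<Rightarrow> ('a \<Rightarrow> 'v) \<Rightarrow> bool" where
  "lip1_pointed M d z N f \<longleftrightarrow> f z = 0 \<and> (\<forall>u\<in>M. \<forall>v\<in>M. N (f u - f v) \<le> d u v)"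

end

(* Every 1-Lipschitz f with f 0 = 0 satisfies
     a f(x) + b f(y) = (a - t) f(x) + (b + t) f(y) + t (f(x) - f(y))   for every real t,
   so by the p-triangle inequality the p-th power of its norm is at most the cost
     G(t) = |(a - t) d_x|^p + |(b + t) d_y|^p + |t d_xy|^p.
   G is a weighted sum of |t - c|^p over the centres c = a, -b, 0; it is concave between
   consecutive centres and monotone outside them, so its minimum is attained at a centre, and
   the values there are the three expressions of the minimum. Conversely min_t G(t) is
   p-subadditive in (a, b), as an infimum of the jointly p-subadditive G, and homogeneous, so
   its p-th root is a p-norm on R^2 for which x |-> (1, 0), y |-> (0, 1) is 1-Lipschitz; this
   realises the bound exactly. *)

theory Submission
  imports Defs
begin

lemma powr_add_le:
  fixes x y p :: real
  assumes "0 < p" "p \<le> 1" "0 \<le> x" "0 \<le> y"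
  shows "(x + y) powr p \<le> x powr p + y powr p"
proof (cases "x + y = 0")
  case True
  then show ?thesis using assms by simp
next
  case False
  define s where "s = x + y"
  have s: "0 < s" using False assms by (simp add: s_def)
  have frac_le: "u / s \<le> u powr p / s powr p" if "0 \<le> u" "u \<le> s" for u
  proof -
    have "u / s = (u / s) powr 1" using that s by simp
    also have "\<dots> \<le> (u / s) powr p" using that s assms by (intro powr_mono') auto
    finally show ?thesis using that s by (simp add: powr_divide)
  qed
  have "1 = x / s + y / s" using s by (simp add: s_def add_divide_distrib[symmetric])
  also have "\<dots> \<le> (x powr p + y powr p) / s powr p"
    using frac_le[of x] frac_le[of y] assms by (simp add: s_def add_divide_distrib)
  finally show ?thesis using s by (simp add: s_def)
qed

lemma abs_powr_add_le:
  fixes u v p :: real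
  assumes "0 < p" "p \<le> 1"
  shows "\<bar>u + v\<bar> powr p \<le> \<bar>u\<bar> powr p + \<bar>v\<bar> powr p"
proof -
  have "\<bar>u + v\<bar> powr p \<le> (\<bar>u\<bar> + \<bar>v\<bar>) powr p"
    using assms by (intro powr_mono2) auto
  also have "\<dots> \<le> \<bar>u\<bar> powr p + \<bar>v\<bar> powr p"
    using assms by (intro powr_add_le) auto
  finally show ?thesis .
qed

lemma powr_le_powr_iff:
  fixes x y p :: real
  assumes "0 < p" "0 \<le> x" "0 \<le> y"
  shows "x powr p \<le> y powr p \<longleftrightarrow> x \<le> y"
  using assms by (meson not_le powr_less_mono2 powr_mono2 less_imp_le)

lemma powr_concave:
  fixes p :: real
  assumes "0 < p" "p \<le> 1"
  shows "concave_on {0..} (\<lambda>x. x powr p)"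
proof (rule concave_on_linorderI)
  fix t x y :: real
  assume t: "0 < t" "t < 1" and xy: "x \<in> {0..}" "y \<in> {0..}" "x < y"
  show "(1 - t) * x powr p + t * y powr p \<le> ((1 - t) *\<^sub>R x + t *\<^sub>R y) powr p"
  proof (cases "x = 0")
    case True
    have "t = t powr 1" using t by simp
    also have "\<dots> \<le> t powr p" using t assms by (intro powr_mono') auto
    finally have "t * y powr p \<le> t powr p * y powr p"
      using xy by (intro mult_right_mono) auto
    then show ?thesis using True t xy assms by (simp add: powr_mult)
  next
    case False
    have "concave_on {0<..} (\<lambda>x::real. x powr p)"
      by (rule f''_le0_imp_concave[where f' = "\<lambda>x. p * x powr (p - 1)"
            and f'' = "\<lambda>x. p * ((p - 1) * x powr (p - 1 - 1))"])
        (use assms in \<open>auto intro!: derivative_eq_intros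
           simp: mult_nonneg_nonpos mult_nonpos_nonneg\<close>)
    from concave_onD[OF this, of t x y] show ?thesis using False t xy by auto
  qed
qed simp

lemma abs_diff_powr_concave:
  fixes p l r c :: real
  assumes "0 < p" "p \<le> 1" "c \<le> l \<or> r \<le> c"
  shows "concave_on {l..r} (\<lambda>s. \<bar>s - c\<bar> powr p)"
proof (rule concave_on_linorderI)
  fix t x y :: real
  assume t: "0 < t" "t < 1" and xy: "x \<in> {l..r}" "y \<in> {l..r}"
  have "(1 - t) *\<^sub>R x + t *\<^sub>R y - c = (1 - t) * (x - c) + t * (y - c)"
    by (simp add: algebra_simps)
  also have "\<bar>\<dots>\<bar> = (1 - t) * \<bar>x - c\<bar> + t * \<bar>y - c\<bar>"
  proof (cases "c \<le> l")
    case True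
    then show ?thesis using t xy by (simp add: abs_of_nonneg)
  next
    case False
    then have "x - c \<le> 0" "y - c \<le> 0" using assms(3) xy by auto
    then show ?thesis
      using t by (simp add: abs_of_nonpos mult_nonneg_nonpos add_nonpos_nonpos right_diff_distrib)
  qed
  finally have "\<bar>((1 - t) *\<^sub>R x + t *\<^sub>R y) - c\<bar> = (1 - t) * \<bar>x - c\<bar> + t * \<bar>y - c\<bar>" .
  with concave_onD[OF powr_concave[OF assms(1,2)], of t "\<bar>x - c\<bar>" "\<bar>y - c\<bar>"] t
  show "(1 - t) * \<bar>x - c\<bar> powr p + t * \<bar>y - c\<bar> powr p
    \<le> \<bar>((1 - t) *\<^sub>R x + t *\<^sub>R y) - c\<bar> powr p"
    by simp
qed simp

lemma concave_on_sum_fun: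
  assumes "finite I" "convex S" "\<And>i. i \<in> I \<Longrightarrow> concave_on S (f i)"
  shows "concave_on S (\<lambda>x. \<Sum>i\<in>I. f i x)"
  using assms by (induction I rule: finite_induct) (auto intro: concave_on_add simp: concave_on_const)

lemma sum_abs_powr_min_at_center:
  fixes c w :: "'i \<Rightarrow> real" and p t :: real
  assumes "0 < p" "p \<le> 1" "finite I" "I \<noteq> {}" "\<And>i. i \<in> I \<Longrightarrow> 0 \<le> w i"
  shows "\<exists>j\<in>I. (\<Sum>i\<in>I. w i * \<bar>c j - c i\<bar> powr p) \<le> (\<Sum>i\<in>I. w i * \<bar>t - c i\<bar> powr p)"
proof -
  define g where "g s = (\<Sum>i\<in>I. w i * \<bar>s - c i\<bar> powr p)" for s
  have closer: "g s \<le> g t" if "\<And>i. i \<in> I \<Longrightarrow> \<bar>s - c i\<bar> \<le> \<bar>t - c i\<bar>" for s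
    unfolding g_def using that assms(1,5)
    by (intro sum_mono mult_left_mono powr_mono2) auto
  have argmin: "\<exists>j\<in>J. c j = Min (c ` J)" and argmax: "\<exists>j\<in>J. c j = Max (c ` J)"
    if "J \<subseteq> I" "J \<noteq> {}" for J
  proof -
    have "finite (c ` J)" "c ` J \<noteq> {}" using that finite_subset[OF _ assms(3)] by auto
    then show "\<exists>j\<in>J. c j = Min (c ` J)" "\<exists>j\<in>J. c j = Max (c ` J)"
      using Min_in Max_in by (metis imageE)+
  qed
  consider (above) "\<forall>i\<in>I. t \<le> c i" | (below) "\<forall>i\<in>I. c i \<le> t"
    | (between) "\<exists>i\<in>I. c i \<le> t" "\<exists>i\<in>I. t \<le> c i"
    by fastforce
  then show ?thesis
  proof cases
    case above
    obtain j where j: "j \<in> I" "c j = Min (c ` I)" using argmin[of I] assms by auto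
    then have "t \<le> c j" "\<forall>i\<in>I. c j \<le> c i" using above assms(3) by auto
    then have "g (c j) \<le> g t" by (intro closer) (auto simp: abs_if)
    with j(1) show ?thesis unfolding g_def by blast
  next
    case below
    obtain j where j: "j \<in> I" "c j = Max (c ` I)" using argmax[of I] assms by auto
    then have "c j \<le> t" "\<forall>i\<in>I. c i \<le> c j" using below assms(3) by auto
    then have "g (c j) \<le> g t" by (intro closer) (auto simp: abs_if)
    with j(1) show ?thesis unfolding g_def by blast
  next
    case between
    define L where "L = {i\<in>I. c i \<le> t}"
    define R where "R = {i\<in>I. t \<le> c i}"
    have LR: "L \<subseteq> I" "L \<noteq> {}" "R \<subseteq> I" "R \<noteq> {}"
      using between by (auto simp: L_def R_def)
    obtain l where l: "l \<in> L" "c l = Max (c ` L)" using argmax LR by blast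
    obtain r where r: "r \<in> R" "c r = Min (c ` R)" using argmin LR by blast
    have fin: "finite (c ` L)" "finite (c ` R)" using assms(3) by (simp_all add: L_def R_def)
    have gap: "c i \<le> c l \<or> c r \<le> c i" if "i \<in> I" for i
    proof (cases "c i \<le> t")
      case True
      then have "i \<in> L" using that by (simp add: L_def)
      then show ?thesis using Max_ge[OF fin(1)] l(2) by simp
    next
      case False
      then have "i \<in> R" using that by (simp add: R_def)
      then show ?thesis using Min_le[OF fin(2)] r(2) by simp
    qed
    have "concave_on {c l..c r} g"
      unfolding g_def
    proof (intro concave_on_sum_fun concave_on_cmul abs_diff_powr_concave)
      show "c i \<le> c l \<or> c r \<le> c i" "0 \<le> w i" if "i \<in> I" for i
        using gap assms(5) that by auto
    qed (use assms in auto)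
    moreover have "t \<in> {c l..c r}" using l(1) r(1) by (simp add: L_def R_def)
    ultimately have "min (g (c l)) (g (c r)) \<le> g t" by (rule concave_on_ge_min)
    then have "g (c l) \<le> g t \<or> g (c r) \<le> g t" by (simp add: min_le_iff_disj)
    moreover have "l \<in> I" "r \<in> I" using l(1) r(1) by (simp_all add: L_def R_def)
    ultimately show ?thesis unfolding g_def by blast
  qed
qed

lemma p_metric_pos:
  assumes "p_metric p M d" "u \<in> M" "v \<in> M" "u \<noteq> v"
  shows "0 < d u v"
  using assms unfolding p_metric_def by (metis order_le_less)

lemma pnorm_scaleR_powr_le:
  assumes "p_norm p N" "0 < p" "N u \<le> A"
  shows "N (k *\<^sub>R u) powr p \<le> \<bar>k * A\<bar> powr p"
proof -
  have "0 \<le> N u" and "N (k *\<^sub>R u) = \<bar>k\<bar> * N u" using assms(1) by (auto simp: p_norm_def)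
  moreover from this have "\<bar>k\<bar> * N u \<le> \<bar>k * A\<bar>"
    using assms(3) by (simp add: abs_mult mult_left_mono)
  ultimately show ?thesis using assms(2) by (simp add: powr_mono2)
qed

lemma p_banach_if_equivalent_to_norm:
  fixes N :: "'v::banach \<Rightarrow> real"
  assumes "p_norm p N" "0 < c" "\<And>v. c * norm v \<le> N v" "\<And>v. N v \<le> K * norm v"
  shows "p_banach p N"
  unfolding p_banach_def
proof (intro conjI allI impI)
  fix X :: "nat \<Rightarrow> 'v"
  assume cauchy: "\<forall>e>0. \<exists>M. \<forall>m\<ge>M. \<forall>n\<ge>M. N (X m - X n) < e"
  have "Cauchy X"
    unfolding Cauchy_iff
  proof (intro allI impI)
    fix e :: real
    assume "0 < e"
    then obtain M where M: "\<forall>m\<ge>M. \<forall>n\<ge>M. N (X m - X n) < c * e"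
      using cauchy assms(2) by (meson mult_pos_pos)
    have "norm (X m - X n) < e" if "M \<le> m" "M \<le> n" for m n
    proof -
      have "c * norm (X m - X n) < c * e" using M that assms(3) by (meson le_less_trans)
      then show ?thesis using assms(2) by simp
    qed
    then show "\<exists>M. \<forall>m\<ge>M. \<forall>n\<ge>M. norm (X m - X n) < e" by blast
  qed
  then obtain L where "X \<longlonglongrightarrow> L" using Cauchy_convergent_iff convergent_def by blast
  then have limit: "(\<lambda>n. K * norm (X n - L)) \<longlonglongrightarrow> 0"
    by (intro tendsto_mult_right_zero tendsto_norm_zero LIM_zero)
  have lower: "\<forall>\<^sub>F n in sequentially. 0 \<le> N (X n - L)"
    and upper: "\<forall>\<^sub>F n in sequentially. N (X n - L) \<le> K * norm (X n - L)"
    using assms(1,4) by (simp_all add: p_norm_def)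
  have "(\<lambda>n. N (X n - L)) \<longlonglongrightarrow> 0"
    by (rule tendsto_sandwich[OF lower upper tendsto_const limit])
  then show "\<exists>L. (\<lambda>n. N (X n - L)) \<longlonglongrightarrow> 0" by blast
qed (rule assms(1))

(* The cost of writing a u + b v as (a - t) u + (b + t) v + t (u - v), where u, v, u - v have
   norms at most A, B, C. *)
definition split_cost :: "real \<Rightarrow> real \<Rightarrow> real \<Rightarrow> real \<Rightarrow> real \<Rightarrow> real \<Rightarrow> real \<Rightarrow> real"
  where
  "split_cost p A B C a b t = \<bar>(a - t) * A\<bar> powr p + \<bar>(b + t) * B\<bar> powr p + \<bar>t * C\<bar> powr p"

lemma pnorm_powr_le_split_cost:
  assumes "p_norm p N" "0 < p" "N u \<le> A" "N v \<le> B" "N (u - v) \<le> C"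
  shows "N (a *\<^sub>R u + b *\<^sub>R v) powr p \<le> split_cost p A B C a b t"
proof -
  have tri: "N (s + s') powr p \<le> N s powr p + N s' powr p" for s s'
    using assms(1) by (simp add: p_norm_def)
  have "a *\<^sub>R u + b *\<^sub>R v = ((a - t) *\<^sub>R u + (b + t) *\<^sub>R v) + t *\<^sub>R (u - v)"
    by (simp add: algebra_simps)
  then have "N (a *\<^sub>R u + b *\<^sub>R v) powr p
      \<le> N ((a - t) *\<^sub>R u) powr p + N ((b + t) *\<^sub>R v) powr p + N (t *\<^sub>R (u - v)) powr p"
    using tri[of "(a - t) *\<^sub>R u + (b + t) *\<^sub>R v" "t *\<^sub>R (u - v)"]
      tri[of "(a - t) *\<^sub>R u" "(b + t) *\<^sub>R v"] by simp
  also have "\<dots> \<le> split_cost p A B C a b t"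
    unfolding split_cost_def using assms
    by (intro add_mono pnorm_scaleR_powr_le) auto
  finally show ?thesis .
qed

lemma split_cost_add_le:
  assumes "0 < p" "p \<le> 1"
  shows "split_cost p A B C (a + a') (b + b') (t + t')
    \<le> split_cost p A B C a b t + split_cost p A B C a' b' t'"
proof -
  have summand: "\<bar>(u + u') * D\<bar> powr p \<le> \<bar>u * D\<bar> powr p + \<bar>u' * D\<bar> powr p" for u u' D
    using abs_powr_add_le[OF assms, of "u * D" "u' * D"] by (simp add: distrib_right)
  have regroup: "a + a' - (t + t') = (a - t) + (a' - t')" "b + b' + (t + t') = (b + t) + (b' + t')"
    by simp_all
  show ?thesis
    unfolding split_cost_def regroup
    using summand[of "a - t" "a' - t'" A] summand[of "b + t" "b' + t'" B] summand[of t t' C] by linarith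
qed

definition free_pnorm_pow :: "real \<Rightarrow> real \<Rightarrow> real \<Rightarrow> real \<Rightarrow> real \<Rightarrow> real \<Rightarrow> real" where
  "free_pnorm_pow p A B C a b = min (\<bar>a * A\<bar> powr p + \<bar>b * B\<bar> powr p)
     (min (\<bar>(a + b) * A\<bar> powr p + \<bar>b * C\<bar> powr p)
          (\<bar>(a + b) * B\<bar> powr p + \<bar>a * C\<bar> powr p))"

lemma split_cost_at_centers:
  assumes "0 < p"
  shows "split_cost p A B C a b 0 = \<bar>a * A\<bar> powr p + \<bar>b * B\<bar> powr p"
    and "split_cost p A B C a b (- b) = \<bar>(a + b) * A\<bar> powr p + \<bar>b * C\<bar> powr p"
    and "split_cost p A B C a b a = \<bar>(a + b) * B\<bar> powr p + \<bar>a * C\<bar> powr p"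
  using assms by (simp_all add: split_cost_def abs_mult add.commute)

lemma free_pnorm_pow_eq_split_cost:
  assumes "0 < p"
  shows "\<exists>t. free_pnorm_pow p A B C a b = split_cost p A B C a b t"
proof -
  have "free_pnorm_pow p A B C a b \<in> {split_cost p A B C a b 0, split_cost p A B C a b (- b),
      split_cost p A B C a b a}"
    unfolding free_pnorm_pow_def split_cost_at_centers[OF assms] by (simp add: min_def)
  then show ?thesis by blast
qed

lemma free_pnorm_pow_le_split_cost:
  assumes "0 < p" "p \<le> 1" "0 \<le> A" "0 \<le> B" "0 \<le> C"
  shows "free_pnorm_pow p A B C a b \<le> split_cost p A B C a b t"
proof -
  define c :: "nat \<Rightarrow> real" where "c = (!) [a, - b, 0]"
  define w :: "nat \<Rightarrow> real" where "w = (!) [A powr p, B powr p, C powr p]"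
  have cost: "split_cost p A B C a b s = (\<Sum>i\<in>{0, 1, 2}. w i * \<bar>s - c i\<bar> powr p)" for s
    using assms by (simp add: split_cost_def c_def w_def abs_mult powr_mult abs_minus_commute add.commute)
  have "\<exists>j\<in>{0, 1, 2}. (\<Sum>i\<in>{0, 1, 2}. w i * \<bar>c j - c i\<bar> powr p)
      \<le> (\<Sum>i\<in>{0, 1, 2}. w i * \<bar>t - c i\<bar> powr p)"
    using assms(1,2) by (rule sum_abs_powr_min_at_center) (auto simp: w_def)
  then obtain j where "j \<in> {0, 1, 2}" "split_cost p A B C a b (c j) \<le> split_cost p A B C a b t"
    unfolding cost by blast
  moreover have "free_pnorm_pow p A B C a b \<le> split_cost p A B C a b (c j)" if "j \<in> {0, 1, 2}"
    using that assms(1) by (auto simp: c_def free_pnorm_pow_def split_cost_at_centers min_le_iff_disj)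
  ultimately show ?thesis by fastforce
qed

lemma pnorm_powr_le_free_pnorm_pow:
  assumes "p_norm p N" "0 < p" "N u \<le> A" "N v \<le> B" "N (u - v) \<le> C"
  shows "N (a *\<^sub>R u + b *\<^sub>R v) powr p \<le> free_pnorm_pow p A B C a b"
  using pnorm_powr_le_split_cost[OF assms] free_pnorm_pow_eq_split_cost[OF assms(2)] by metis

lemma free_pnorm_pow_nonneg: "0 \<le> free_pnorm_pow p A B C a b"
  by (simp add: free_pnorm_pow_def)

lemma free_pnorm_pow_add_le:
  assumes "0 < p" "p \<le> 1" "0 \<le> A" "0 \<le> B" "0 \<le> C"
  shows "free_pnorm_pow p A B C (a + a') (b + b')
    \<le> free_pnorm_pow p A B C a b + free_pnorm_pow p A B C a' b'"
proof -
  obtain t t' where "free_pnorm_pow p A B C a b = split_cost p A B C a b t"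
    and "free_pnorm_pow p A B C a' b' = split_cost p A B C a' b' t'"
    using free_pnorm_pow_eq_split_cost[OF assms(1)] by metis
  then show ?thesis
    using free_pnorm_pow_le_split_cost[OF assms, of "a + a'" "b + b'" "t + t'"]
      split_cost_add_le[OF assms(1,2), of A B C a a' b b' t t'] by linarith
qed

lemma free_pnorm_pow_scale:
  assumes "0 < p"
  shows "free_pnorm_pow p A B C (k * a) (k * b) = \<bar>k\<bar> powr p * free_pnorm_pow p A B C a b"
proof -
  have factor: "\<bar>k * u * D\<bar> powr p = \<bar>k\<bar> powr p * \<bar>u * D\<bar> powr p" for u D
    by (simp add: abs_mult powr_mult)
  have factor_sum: "k * a + k * b = k * (a + b)" by (simp add: algebra_simps)
  show ?thesis
    unfolding free_pnorm_pow_def factor_sum factor by (simp add: min_mult_distrib_left distrib_left)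
qed

lemma free_pnorm_pow_le_norm:
  assumes "0 < p" "0 \<le> A" "0 \<le> B"
  shows "free_pnorm_pow p A B C a b \<le> (A powr p + B powr p) * norm (a, b) powr p"
proof -
  have "\<bar>u\<bar> powr p \<le> norm (a, b) powr p" if "u = a \<or> u = b" for u
    using that assms(1) norm_fst_le[of a b] norm_snd_le[of b a] by (auto intro: powr_mono2)
  then have "A powr p * \<bar>a\<bar> powr p + B powr p * \<bar>b\<bar> powr p \<le> (A powr p + B powr p) * norm (a, b) powr p"
    by (simp add: distrib_right add_mono mult_left_mono)
  moreover have "free_pnorm_pow p A B C a b \<le> \<bar>a * A\<bar> powr p + \<bar>b * B\<bar> powr p"
    by (simp add: free_pnorm_pow_def)
  ultimately show ?thesis using assms by (simp add: abs_mult powr_mult mult.commute)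
qed

lemma norm_le_free_pnorm_pow:
  assumes "0 < p" "p \<le> 1" "0 \<le> A" "0 \<le> B" "0 \<le> C"
  shows "min (A powr p) (min (B powr p) (C powr p)) / 2 * norm (a, b) powr p
    \<le> free_pnorm_pow p A B C a b"
proof -
  define w where "w = min (A powr p) (min (B powr p) (C powr p))"
  have w: "0 \<le> w" "w \<le> A powr p" "w \<le> B powr p" "w \<le> C powr p" by (auto simp: w_def)
  have weight: "w * \<bar>u\<bar> powr p \<le> D * \<bar>u\<bar> powr p" if "w \<le> D" for u D
    using that by (simp add: mult_right_mono)
  obtain t where t: "free_pnorm_pow p A B C a b = split_cost p A B C a b t"
    using free_pnorm_pow_eq_split_cost[OF assms(1)] by blast
  have cost: "split_cost p A B C a b t
      = A powr p * \<bar>a - t\<bar> powr p + B powr p * \<bar>b + t\<bar> powr p + C powr p * \<bar>t\<bar> powr p"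
    using assms by (simp add: split_cost_def abs_mult powr_mult mult.commute)
  have summands_nonneg: "0 \<le> A powr p * \<bar>a - t\<bar> powr p" "0 \<le> B powr p * \<bar>b + t\<bar> powr p"
    by simp_all
  have "w * \<bar>a\<bar> powr p \<le> w * \<bar>a - t\<bar> powr p + w * \<bar>t\<bar> powr p"
    using mult_left_mono[OF abs_powr_add_le[OF assms(1,2), of "a - t" t] w(1)]
    by (simp add: distrib_left)
  also have "\<dots> \<le> split_cost p A B C a b t"
    unfolding cost using weight[OF w(2), of "a - t"] weight[OF w(4), of t] summands_nonneg(2)
    by linarith
  finally have a_bound: "w * \<bar>a\<bar> powr p \<le> split_cost p A B C a b t" .
  have "w * \<bar>b\<bar> powr p \<le> w * \<bar>b + t\<bar> powr p + w * \<bar>t\<bar> powr p"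
    using mult_left_mono[OF abs_powr_add_le[OF assms(1,2), of "b + t" "- t"] w(1)]
    by (simp add: distrib_left)
  also have "\<dots> \<le> split_cost p A B C a b t"
    unfolding cost using weight[OF w(3), of "b + t"] weight[OF w(4), of t] summands_nonneg(1)
    by linarith
  finally have b_bound: "w * \<bar>b\<bar> powr p \<le> split_cost p A B C a b t" .
  have "norm (a, b) powr p \<le> (\<bar>a\<bar> + \<bar>b\<bar>) powr p"
    using norm_Pair_le[of a b] assms(1) by (simp add: powr_mono2)
  also have "\<dots> \<le> \<bar>a\<bar> powr p + \<bar>b\<bar> powr p" using assms(1,2) by (simp add: powr_add_le)
  finally have norm_bound: "norm (a, b) powr p \<le> \<bar>a\<bar> powr p + \<bar>b\<bar> powr p" .
  have "w / 2 * norm (a, b) powr p \<le> w / 2 * (\<bar>a\<bar> powr p + \<bar>b\<bar> powr p)"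
    using norm_bound w(1) by (simp add: mult_left_mono)
  also have "\<dots> \<le> split_cost p A B C a b t" using a_bound b_bound by (simp add: field_simps)
  finally show ?thesis unfolding w_def t .
qed

definition free_pnorm :: "real \<Rightarrow> real \<Rightarrow> real \<Rightarrow> real \<Rightarrow> real \<times> real \<Rightarrow> real" where
  "free_pnorm p A B C v = free_pnorm_pow p A B C (fst v) (snd v) powr (1 / p)"

lemma free_pnorm_nonneg: "0 \<le> free_pnorm p A B C v"
  by (simp add: free_pnorm_def)

lemma free_pnorm_powr:
  assumes "0 < p"
  shows "free_pnorm p A B C v powr p = free_pnorm_pow p A B C (fst v) (snd v)"
  using assms free_pnorm_pow_nonneg by (simp add: free_pnorm_def powr_powr)

lemma free_pnorm_le_iff:
  assumes "0 < p" "0 \<le> K"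
  shows "free_pnorm p A B C v \<le> K \<longleftrightarrow> free_pnorm_pow p A B C (fst v) (snd v) \<le> K powr p"
  unfolding free_pnorm_powr[OF assms(1), symmetric]
  using powr_le_powr_iff[OF assms(1) free_pnorm_nonneg assms(2)] by simp

lemma p_norm_free_pnorm:
  assumes "0 < p" "p \<le> 1" "0 < A" "0 < B" "0 < C"
  shows "p_norm p (free_pnorm p A B C)"
  unfolding p_norm_def
proof (intro conjI allI)
  fix v :: "real \<times> real"
  show "0 \<le> free_pnorm p A B C v" by (rule free_pnorm_nonneg)
  have "free_pnorm p A B C v = 0 \<longleftrightarrow> free_pnorm_pow p A B C (fst v) (snd v) = 0"
    using free_pnorm_powr[OF assms(1), of A B C v] by (auto simp: free_pnorm_def)
  also have "\<dots> \<longleftrightarrow> v = 0"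
  proof
    assume "free_pnorm_pow p A B C (fst v) (snd v) = 0"
    then have "min (A powr p) (min (B powr p) (C powr p)) / 2 * norm v powr p \<le> 0"
      using norm_le_free_pnorm_pow[OF assms(1,2), of A B C "fst v" "snd v"] assms by simp
    moreover have "0 < min (A powr p) (min (B powr p) (C powr p))"
      using assms by (simp add: min_def)
    ultimately show "v = 0" by (simp add: mult_le_0_iff)
  qed (use assms(1) in \<open>simp add: free_pnorm_pow_def\<close>)
  finally show "free_pnorm p A B C v = 0 \<longleftrightarrow> v = 0" .
next
  fix t and v :: "real \<times> real"
  show "free_pnorm p A B C (t *\<^sub>R v) = \<bar>t\<bar> * free_pnorm p A B C v"
    using assms(1) free_pnorm_pow_nonneg
    by (simp add: free_pnorm_def free_pnorm_pow_scale powr_mult powr_powr)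
next
  fix v w :: "real \<times> real"
  show "free_pnorm p A B C (v + w) powr p
    \<le> free_pnorm p A B C v powr p + free_pnorm p A B C w powr p"
    unfolding free_pnorm_powr[OF assms(1)] using assms by (simp add: free_pnorm_pow_add_le)
qed

lemma p_banach_free_pnorm:
  assumes "0 < p" "p \<le> 1" "0 < A" "0 < B" "0 < C"
  shows "p_banach p (free_pnorm p A B C)"
proof (rule p_banach_if_equivalent_to_norm[OF p_norm_free_pnorm[OF assms]])
  define c where "c = (min (A powr p) (min (B powr p) (C powr p)) / 2) powr (1 / p)"
  define K where "K = (A powr p + B powr p) powr (1 / p)"
  have w: "0 < min (A powr p) (min (B powr p) (C powr p))"
    using assms by (simp add: min_def)
  then show "0 < c" unfolding c_def powr_gt_zero by linarith
  have c_powr: "c powr p = min (A powr p) (min (B powr p) (C powr p)) / 2"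
    and K_powr: "K powr p = A powr p + B powr p"
    using assms w by (simp_all add: c_def K_def powr_powr)
  fix v :: "real \<times> real"
  have "(c * norm v) powr p = c powr p * norm v powr p"
    using \<open>0 < c\<close> by (simp add: powr_mult)
  also have "\<dots> \<le> free_pnorm p A B C v powr p"
    unfolding c_powr free_pnorm_powr[OF assms(1)]
    using norm_le_free_pnorm_pow[OF assms(1,2), of A B C "fst v" "snd v"] assms by simp
  finally show "c * norm v \<le> free_pnorm p A B C v"
    using powr_le_powr_iff[OF assms(1)] \<open>0 < c\<close> free_pnorm_nonneg by simp
  have "free_pnorm_pow p A B C (fst v) (snd v) \<le> K powr p * norm v powr p"
    unfolding K_powr using free_pnorm_pow_le_norm[OF assms(1), of A B C "fst v" "snd v"] assms by simp
  then show "free_pnorm p A B C v \<le> K * norm v"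
    using assms(1) by (simp add: free_pnorm_le_iff K_def powr_mult)
qed

lemma lip1_pointed_free_pnorm:
  assumes "0 < p" "p_metric p {z, x, y} d" "x \<noteq> z" "y \<noteq> z" "x \<noteq> y"
  shows "lip1_pointed {z, x, y} d z (free_pnorm p (d x z) (d y z) (d x y))
           (\<lambda>u. if u = x then (1, 0) else if u = y then (0, 1) else 0)"
proof -
  let ?N = "free_pnorm p (d x z) (d y z) (d x y)"
  have metric: "d z z = 0" "d x x = 0" "d y y = 0" "d z x = d x z" "d z y = d y z" "d y x = d x y"
    using assms(2) unfolding p_metric_def by blast+
  have pos: "0 < d x z" "0 < d y z" "0 < d x y"
    using assms by (auto intro: p_metric_pos)
  have units: "?N (1, 0) \<le> d x z" "?N (-1, 0) \<le> d x z" "?N (0, 1) \<le> d y z" "?N (0, -1) \<le> d y z"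
    "?N (1, -1) \<le> d x y" "?N (-1, 1) \<le> d x y"
    using assms(1) pos by (simp_all add: free_pnorm_le_iff free_pnorm_pow_def min_le_iff_disj)
  have zero: "?N (0, 0) = 0" using assms(1) by (simp add: free_pnorm_def free_pnorm_pow_def)
  show ?thesis
    unfolding lip1_pointed_def
    using assms(3-5) units zero metric pos by (auto simp: zero_prod_def)
qed

theorem corollary2p7:
  fixes p :: real and d :: "'a \<Rightarrow> 'a \<Rightarrow> real" and z x y :: 'a and a b :: real
  assumes "0 < p" and "p \<le> 1"
    and "p_metric p {z, x, y} d"
    and "x \<noteq> z" and "y \<noteq> z" and "x \<noteq> y"
  defines "m \<equiv> min (\<bar>a * d x z\<bar> powr p + \<bar>b * d y z\<bar> powr p)
                 (min (\<bar>(a + b) * d x z\<bar> powr p + \<bar>b * d x y\<bar> powr p)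
                      (\<bar>(a + b) * d y z\<bar> powr p + \<bar>a * d x y\<bar> powr p))"
  shows "(\<forall>(N :: 'v::real_vector \<Rightarrow> real) f. p_banach p N \<and> lip1_pointed {z, x, y} d z N f
            \<longrightarrow> N (a *\<^sub>R f x + b *\<^sub>R f y) powr p \<le> m)
       \<and> (\<forall>e>0. \<exists>(N :: real \<times> real \<Rightarrow> real) f. p_banach p N \<and> lip1_pointed {z, x, y} d z N f
            \<and> N (a *\<^sub>R f x + b *\<^sub>R f y) powr p > m - e)"
proof -
  have m: "m = free_pnorm_pow p (d x z) (d y z) (d x y) a b"
    unfolding m_def free_pnorm_pow_def ..
  have upper: "N (a *\<^sub>R f x + b *\<^sub>R f y) powr p \<le> m"
    if "p_banach p N" "lip1_pointed {z, x, y} d z N f" for N :: "'v \<Rightarrow> real" and f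
  proof -
    have "N (f x) \<le> d x z" "N (f y) \<le> d y z" "N (f x - f y) \<le> d x y"
      using that(2) unfolding lip1_pointed_def by (metis diff_zero insertCI)+
    with that(1) show ?thesis
      unfolding m p_banach_def using assms(1) by (blast intro: pnorm_powr_le_free_pnorm_pow)
  qed
  define f :: "'a \<Rightarrow> real \<times> real"
    where "f u = (if u = x then (1, 0) else if u = y then (0, 1) else 0)" for u
  have attained: "free_pnorm p (d x z) (d y z) (d x y) (a *\<^sub>R f x + b *\<^sub>R f y) powr p = m"
    using assms(1,6) by (simp add: m f_def free_pnorm_powr)
  have "p_banach p (free_pnorm p (d x z) (d y z) (d x y))"
    using assms by (intro p_banach_free_pnorm) (auto intro: p_metric_pos)
  moreover have "lip1_pointed {z, x, y} d z (free_pnorm p (d x z) (d y z) (d x y)) f"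
    unfolding f_def using assms(1,3-6) by (rule lip1_pointed_free_pnorm)
  ultimately show ?thesis using upper attained by force
qed

end
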